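(* For any matching $\pi$ of size $n$, $\sum_{p=1}^{n-1} m_p(\pi)\le d(\pi)$, and $d(\pi)-\sum_{p=1}^{n-1} m_p(\pi)$ is an even nonnegative integer.
   Context: A matching of size $n$ is a set of $n$ disjoint noncrossing pairs partitioning $\{1,\dots,2n\}$ (no arches $\{i<j\},\{k<l\}$ with $i<k<j<l$). Encode $\pi$ by the increasing sequence $a_1<\dots<a_n$ of the smaller elements of its arches. The Young diagram $Y(\pi)$ has rows (top to bottom) of lengths $a_n-n\ge\dots\ge a_1-1$, and $d(\pi)=\sum_i(a_i-i)$ is its number of boxes. A box in row $x$ from the top and column $y$ from the left is $(x,y)$. Label box $(x,y)$ by $n+1-x-y$. The rim of a nonempty Young diagram is the set of boxes $(x,y)$ with $(x+1,y+1)$ not in the diagram; iteratively removing rims gives the rim decomposition $R_1,\dots,R_s$ of $Y(\pi)$. For each rim $R_\ell$ let $i$ be the label of its bottom-left box (in its leftmost column), $j$ the label of its top-right box (in its topmost row), $k$ its minimal label, and $B_\ell=\{k\}\cup\{i,\dots,k+1\}\cup\{j,\dots,k+1\}$ (multiset). For $1\le p\le n-1$, $m_p(\pi)$ is the multiplicity of $p$ in the multiset union of all $B_\ell$ (equivalently, $m_p(\pi)=\tfrac12(|\mathcal A^L_p|+|\mathcal A^R_p|)$ where, with $\widehat p=2n+1-p$, $\mathcal A^L_p$ is the set of arches $\{b<c\}$ with $b\le p<c<\widehat p$ and $\mathcal A^R_p$ the set of arches with $p<b<\widehat p\le c$). *)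

theory Defs
  imports Main "HOL-Library.Multiset"
begin

definition noncrossing_matching :: "nat \<Rightarrow> (nat \<times> nat) set \<Rightarrow> bool" where
  "noncrossing_matching n M \<longleftrightarrow>
     (\<forall>(i,j)\<in>M. i < j \<and> i \<in> {1..2*n} \<and> j \<in> {1..2*n}) \<and>
     (\<forall>x\<in>{1..2*n}. \<exists>!e. e \<in> M \<and> (x = fst e \<or> x = snd e)) \<and>
     (\<forall>(i,j)\<in>M. \<forall>(k,l)\<in>M. \<not> (i < k \<and> k < j \<and> j < l))"

definition opener :: "(nat \<times> nat) set \<Rightarrow> nat \<Rightarrow> nat" where
  "opener M i = sorted_list_of_set (fst ` M) ! (i - 1)"

definition dpi :: "nat \<Rightarrow> (nat \<times> nat) set \<Rightarrow> nat" where
  "dpi n M = (\<Sum>i=1..n. opener M i - i)"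

text \<open>Young diagram: box (x,y), row x from top (1..n), column y from left;
  row x has length a_{n+1-x} - (n+1-x).\<close>
definition young_diagram :: "nat \<Rightarrow> (nat \<times> nat) set \<Rightarrow> (nat \<times> nat) set" where
  "young_diagram n M = {(x,y). 1 \<le> x \<and> x \<le> n \<and> 1 \<le> y \<and> y \<le> opener M (n+1-x) - (n+1-x)}"

definition box_label :: "nat \<Rightarrow> nat \<times> nat \<Rightarrow> int" where
  "box_label n b = int n + 1 - int (fst b) - int (snd b)"

definition rim :: "(nat \<times> nat) set \<Rightarrow> (nat \<times> nat) set" where
  "rim D = {(x,y). (x,y) \<in> D \<and> (x+1, y+1) \<notin> D}"

definition rim_at :: "(nat \<times> nat) set \<Rightarrow> nat \<Rightarrow> (nat \<times> nat) set" where
  "rim_at D l = rim (((\<lambda>E. E - rim E) ^^ l) D)"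

text \<open>The rim decomposition R_1,...,R_s as a list (each nonempty rim; at most card D of them).\<close>
definition rim_decomposition :: "(nat \<times> nat) set \<Rightarrow> (nat \<times> nat) set list" where
  "rim_decomposition D = filter (\<lambda>R. R \<noteq> {}) (map (rim_at D) [0..<card D + 1])"

definition rim_B :: "nat \<Rightarrow> (nat \<times> nat) set \<Rightarrow> int multiset" where
  "rim_B n R =
    (let c = Min (snd ` R); bl = (Max {x. (x,c) \<in> R}, c);
         r = Min (fst ` R); tr = (r, Max {y. (r,y) \<in> R});
         i = box_label n bl; j = box_label n tr; k = Min (box_label n ` R)
     in {#k#} + mset_set {k+1..i} + mset_set {k+1..j})"

definition mult_m :: "nat \<Rightarrow> (nat \<times> nat) set \<Rightarrow> nat \<Rightarrow> nat" where
  "mult_m n M p = count (sum_list (map (rim_B n) (rim_decomposition (young_diagram n M)))) (int p)"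

end

theory Submission
  imports Defs
begin

(* Write D = Y(pi) and X for the multiset union of the B_l over the rim
   decomposition R_1, ..., R_s of D, so that sum_{p=1}^{n-1} m_p(pi) = |X| as soon as X is
   supported in {1..n-1}.  The theorem then follows from two facts:
   (1) D is a Young diagram with d(pi) boxes, all of positive label; positivity comes from the
       bound a_m <= 2m - 1 on the openers of a matching;
   (2) for the rim R of any Young diagram with r rows and c columns and minimal label k,
       |R| = r + c - 1 (one box per diagonal) while |B| = 2n + 1 - r - c - 2k with
       k >= n + 1 - r - c, so |R| - |B| is even and nonnegative.
   Since the rims partition D, summing (2) over the decomposition gives d(pi) = |X| + 2T. *)

lemma matching_arch:
  assumes "noncrossing_matching n M" "e \<in> M"
  shows "fst e < snd e" "fst e \<in> {1..2*n}" "snd e \<in> {1..2*n}"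
  using assms unfolding noncrossing_matching_def by (auto simp: case_prod_beta)

lemma matching_cover:
  assumes "noncrossing_matching n M" "z \<in> {1..2*n}"
  shows "\<exists>!e. e \<in> M \<and> (z = fst e \<or> z = snd e)"
  using assms unfolding noncrossing_matching_def by blast

lemma matching_inj_fst:
  assumes nm: "noncrossing_matching n M"
  shows "inj_on fst M"
  using matching_cover[OF nm] matching_arch(2)[OF nm] by (metis inj_onI)

lemma card_le_twice_if_covered:
  assumes "finite A" "S \<subseteq> (\<Union>e\<in>A. {fst e, snd e})"
  shows "card S \<le> 2 * card A"
proof -
  have "card S \<le> card (\<Union>e\<in>A. {fst e, snd e})" using assms by (intro card_mono) auto
  also have "\<dots> \<le> (\<Sum>e\<in>A. card {fst e, snd e})" by (rule card_UN_le[OF assms(1)])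
  also have "\<dots> \<le> (\<Sum>e\<in>A. 2)" by (rule sum_mono) (simp add: card_insert_le_m1)
  finally show ?thesis by simp
qed

(* The n arches partition the 2n points, so a matching of size n has exactly n openers. *)
lemma card_openers:
  assumes nm: "noncrossing_matching n M"
  shows "finite (fst ` M)" "card (fst ` M) = n"
proof -
  have "M \<subseteq> {1..2*n} \<times> {1..2*n}" using matching_arch[OF nm] by (auto simp: mem_Times_iff)
  then have fin: "finite M" by (rule finite_subset) auto
  have disj: "\<forall>e\<in>M. \<forall>e'\<in>M. e \<noteq> e' \<longrightarrow> {fst e, snd e} \<inter> {fst e', snd e'} = {}"
    using matching_cover[OF nm] matching_arch[OF nm] by blast
  have "(\<Union>e\<in>M. {fst e, snd e}) = {1..2*n}"
    using matching_cover[OF nm] matching_arch[OF nm] by blast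
  then have "2*n = card (\<Union>e\<in>M. {fst e, snd e})" by simp
  also have "\<dots> = (\<Sum>e\<in>M. card {fst e, snd e})" using card_UN_disjoint[OF fin _ disj] by simp
  also have "\<dots> = (\<Sum>e\<in>M. 2)"
  proof (rule sum.cong)
    fix e assume "e \<in> M"
    then show "card {fst e, snd e} = 2" using matching_arch(1)[OF nm] by fastforce
  qed simp
  finally have "card M = n" by simp
  then show "card (fst ` M) = n" using card_image[OF matching_inj_fst[OF nm]] by simp
  show "finite (fst ` M)" using fin by simp
qed

lemma sorted_nth_gap:
  assumes "sorted_wrt (<) (s :: nat list)" "t \<le> t'" "t' < length s"
  shows "s ! t + (t' - t) \<le> s ! t'"
  using assms(2,3)
proof (induction t')
  case (Suc t')
  show ?case
  proof (cases "t = Suc t'")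
    case False
    then have "t \<le> t'" using Suc.prems by simp
    moreover have "s ! t' < s ! Suc t'" using assms(1) Suc.prems sorted_wrt_nth_less by fastforce
    ultimately show ?thesis using Suc by simp
  qed simp
qed simp

lemma card_below_nth:
  assumes "sorted_wrt (<) (s :: 'a :: linorder list)" "t < length s"
  shows "card {a \<in> set s. a < s ! t} = t"
proof -
  have "{a \<in> set s. a < s ! t} = set (take t s)"
  proof (intro set_eqI iffI)
    fix a assume "a \<in> {a \<in> set s. a < s ! t}"
    then obtain u where u: "u < length s" "a = s ! u" "s ! u < s ! t" by (auto simp: in_set_conv_nth)
    then have "u < t"
      using sorted_wrt_nth_less[OF assms(1), of t u] by (metis not_less_iff_gr_or_eq order.asym)
    then show "a \<in> set (take t s)" using u by (auto simp: in_set_conv_nth)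
  next
    fix a assume "a \<in> set (take t s)"
    then obtain u where "u < t" "a = s ! u" using assms(2) by (auto simp: in_set_conv_nth)
    then show "a \<in> {a \<in> set s. a < s ! t}" using assms sorted_wrt_nth_less[OF assms(1)] by auto
  qed
  moreover have "distinct s" using assms(1) by (simp add: strict_sorted_iff)
  ultimately show ?thesis using assms(2) by (simp add: distinct_card)
qed

lemma openers_sorted:
  assumes nm: "noncrossing_matching n M"
  shows "sorted_wrt (<) (sorted_list_of_set (fst ` M))"
    "length (sorted_list_of_set (fst ` M)) = n"
    "set (sorted_list_of_set (fst ` M)) = fst ` M"
  using card_openers[OF nm] by simp_all

lemma opener_mem:
  assumes nm: "noncrossing_matching n M" and "1 \<le> m" "m \<le> n"
  shows "opener M m \<in> fst ` M"
  using openers_sorted[OF nm] assms(2,3) unfolding opener_def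
  by (metis One_nat_def Suc_le_eq diff_less le_trans less_numeral_extra(1) nth_mem)

lemma opener_gap:
  assumes nm: "noncrossing_matching n M" and "1 \<le> i" "i \<le> m" "m \<le> n"
  shows "opener M i + (m - i) \<le> opener M m"
  using sorted_nth_gap[OF openers_sorted(1)[OF nm], of "i - 1" "m - 1"] openers_sorted(2)[OF nm]
    assms(2-4) unfolding opener_def by simp

lemma card_openers_below:
  assumes nm: "noncrossing_matching n M" and "1 \<le> m" "m \<le> n"
  shows "card {a \<in> fst ` M. a < opener M m} = m - 1"
  using card_below_nth[OF openers_sorted(1)[OF nm], of "m - 1"] openers_sorted(2,3)[OF nm]
    assms(2,3) unfolding opener_def by simp

(* a_m <= 2m - 1: every point below a_m is an endpoint of one of the m - 1 arches opened
   before a_m, and each arch has two endpoints. *)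
lemma opener_le:
  assumes nm: "noncrossing_matching n M" and m: "1 \<le> m" "m \<le> n"
  shows "opener M m \<le> 2 * m - 1"
proof -
  define v where "v = opener M m"
  define Mv where "Mv = {e \<in> M. fst e < v}"
  have v_pos: "1 \<le> v" using opener_mem[OF nm m] matching_arch(2)[OF nm] unfolding v_def by force
  have "card Mv = card (fst ` Mv)"
    using inj_on_subset[OF matching_inj_fst[OF nm]] by (simp add: Mv_def card_image)
  also have "fst ` Mv = {a \<in> fst ` M. a < v}" unfolding Mv_def by auto
  finally have card_Mv: "card Mv = m - 1" using card_openers_below[OF nm m] v_def by simp
  have "{1..<v} \<subseteq> (\<Union>e\<in>Mv. {fst e, snd e})"
  proof
    fix z assume z: "z \<in> {1..<v}"
    have "v \<le> 2*n" using opener_mem[OF nm m] matching_arch(2)[OF nm] unfolding v_def by force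
    then obtain e where e: "e \<in> M" "z = fst e \<or> z = snd e"
      using matching_cover[OF nm, of z] z by auto
    then have "e \<in> Mv" using matching_arch(1)[OF nm e(1)] z unfolding Mv_def by auto
    then show "z \<in> (\<Union>e\<in>Mv. {fst e, snd e})" using e(2) by blast
  qed
  moreover have "finite Mv"
    using finite_imageD[OF card_openers(1)[OF nm] matching_inj_fst[OF nm]] by (simp add: Mv_def)
  ultimately have "card {1..<v} \<le> 2 * (m - 1)" using card_le_twice_if_covered card_Mv by metis
  then show ?thesis using v_pos m unfolding v_def by simp
qed

(* A Young diagram in English notation: a finite set of boxes (x,y) with x, y >= 1 which is
   closed under moving up and to the left. *)
definition downset :: "(nat \<times> nat) set \<Rightarrow> bool" where
  "downset E \<longleftrightarrow> finite E \<and> (\<forall>x y. (x,y) \<in> E \<longrightarrow> 1 \<le> x \<and> 1 \<le> y) \<and>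
     (\<forall>x y x' y'. (x,y) \<in> E \<longrightarrow> 1 \<le> x' \<longrightarrow> x' \<le> x \<longrightarrow> 1 \<le> y' \<longrightarrow> y' \<le> y \<longrightarrow> (x',y') \<in> E)"

lemma downsetD:
  assumes "downset E"
  shows "finite E" "\<And>x y. (x,y) \<in> E \<Longrightarrow> 1 \<le> x \<and> 1 \<le> y"
    "\<And>x y x' y'. (x,y) \<in> E \<Longrightarrow> 1 \<le> x' \<Longrightarrow> x' \<le> x \<Longrightarrow> 1 \<le> y' \<Longrightarrow> y' \<le> y \<Longrightarrow> (x',y') \<in> E"
  using assms unfolding downset_def by blast+

abbreviation row_length :: "nat \<Rightarrow> (nat \<times> nat) set \<Rightarrow> nat \<Rightarrow> nat" where
  "row_length n M x \<equiv> opener M (n + 1 - x) - (n + 1 - x)"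

lemma row_length_antimono:
  assumes nm: "noncrossing_matching n M" and "1 \<le> x'" "x' \<le> x" "x \<le> n"
  shows "row_length n M x \<le> row_length n M x'"
proof -
  have "opener M (n + 1 - x) + ((n + 1 - x') - (n + 1 - x)) \<le> opener M (n + 1 - x')"
    using opener_gap[OF nm, of "n + 1 - x" "n + 1 - x'"] assms(2-4) by simp
  then show ?thesis using assms(3,4) by arith
qed

lemma young_diagram_Sigma:
  "young_diagram n M = Sigma {1..n} (\<lambda>x. {1..row_length n M x})"
  unfolding young_diagram_def by auto

lemma young_diagram_downset:
  assumes nm: "noncrossing_matching n M"
  shows "downset (young_diagram n M)"
  unfolding downset_def
proof (intro conjI allI impI)
  show "finite (young_diagram n M)"
    unfolding young_diagram_Sigma by simp
next
  fix x y x' y' assume "(x,y) \<in> young_diagram n M" "1 \<le> x'" "x' \<le> x" "1 \<le> y'" "y' \<le> y"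
  then show "(x',y') \<in> young_diagram n M"
    using row_length_antimono[OF nm, of x' x] unfolding young_diagram_def by auto
qed (auto simp: young_diagram_def)

(* Every box of Y(pi) has a positive label n + 1 - x - y: by opener_le, row x has length at
   most n - x. *)
lemma young_diagram_label_pos:
  assumes nm: "noncrossing_matching n M" and b: "b \<in> young_diagram n M"
  shows "1 \<le> box_label n b"
proof -
  obtain x y where xy: "b = (x,y)" "1 \<le> x" "x \<le> n" "y \<le> row_length n M x"
    using b unfolding young_diagram_def by auto
  have "opener M (n + 1 - x) \<le> 2 * (n + 1 - x) - 1" using opener_le[OF nm] xy by simp
  then have "y \<le> n - x" using xy by simp
  then show ?thesis using xy unfolding box_label_def by simp
qed

lemma card_young_diagram:
  "card (young_diagram n M) = dpi n M"
proof -
  have "card (young_diagram n M) = (\<Sum>x=1..n. row_length n M x)"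
    unfolding young_diagram_Sigma by (simp add: card_SigmaI)
  also have "\<dots> = (\<Sum>i=1..n. opener M i - i)"
    by (rule sum.reindex_bij_witness[where i="\<lambda>i. n+1-i" and j="\<lambda>i. n+1-i"]) auto
  finally show ?thesis unfolding dpi_def .
qed

definition nrows :: "(nat \<times> nat) set \<Rightarrow> nat" where
  "nrows E = Max (fst ` E)"

definition ncols :: "(nat \<times> nat) set \<Rightarrow> nat" where
  "ncols E = Max (snd ` E)"

lemma downset_box_bounds:
  assumes "downset E" "(x,y) \<in> E"
  shows "x \<le> nrows E" "y \<le> ncols E"
  using downsetD(1)[OF assms(1)] assms(2) unfolding nrows_def ncols_def
  by (metis Max_ge finite_imageI fst_conv snd_conv image_eqI)+

lemma rim_iff: "(x,y) \<in> rim E \<longleftrightarrow> (x,y) \<in> E \<and> (x+1,y+1) \<notin> E"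
  unfolding rim_def by simp

lemma rim_subset: "rim E \<subseteq> E"
  unfolding rim_def by auto

lemma rim_corners:
  assumes ds: "downset E" and ne: "E \<noteq> {}"
  shows "(nrows E, 1) \<in> rim E" "(1, ncols E) \<in> rim E"
proof -
  have "nrows E \<in> fst ` E" "ncols E \<in> snd ` E"
    using downsetD(1)[OF ds] ne unfolding nrows_def ncols_def by simp_all
  then obtain x y where "(nrows E, y) \<in> E" "(x, ncols E) \<in> E" by force
  then have "(nrows E, 1) \<in> E" "(1, ncols E) \<in> E"
    using downsetD(2,3)[OF ds] by blast+
  then show "(nrows E, 1) \<in> rim E" "(1, ncols E) \<in> rim E"
    using downset_box_bounds[OF ds] unfolding rim_iff by fastforce+
qed

(* The content y - x of a box determines a box of the rim: if two boxes of the same diagonal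
   were on the rim, the diagonal successor of the upper one would lie in the diagram. *)
lemma rim_content_inj:
  assumes ds: "downset E"
  shows "inj_on (\<lambda>(x,y). int y - int x) (rim E)"
proof (rule inj_onI, clarify)
  fix x y x' y' assume b: "(x,y) \<in> rim E" "(x',y') \<in> rim E" and eq: "int y - int x = int y' - int x'"
  show "x = x' \<and> y = y'"
  proof (cases x x' rule: linorder_cases)
    case less
    have "(x',y') \<in> E" "1 \<le> x" "1 \<le> y" using b rim_subset downsetD(2)[OF ds] by blast+
    then have "(x+1, y+1) \<in> E" using downsetD(3)[OF ds, of x' y' "x+1" "y+1"] less eq by simp
    then show ?thesis using b(1) rim_iff by blast
  next
    case greater
    have "(x,y) \<in> E" "1 \<le> x'" "1 \<le> y'" using b rim_subset downsetD(2)[OF ds] by blast+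
    then have "(x'+1, y'+1) \<in> E" using downsetD(3)[OF ds, of x y "x'+1" "y'+1"] greater eq by simp
    then show ?thesis using b(2) rim_iff by blast
  qed (use eq in simp)
qed

(* Every diagonal 1 - r <= y - x <= c - 1 meets the rim, namely in its lowest box inside the
   diagram. *)
lemma rim_content_image:
  assumes ds: "downset E" and ne: "E \<noteq> {}"
  shows "(\<lambda>(x,y). int y - int x) ` rim E = {1 - int (nrows E) .. int (ncols E) - 1}"
proof (intro equalityI subsetI)
  fix z assume "z \<in> (\<lambda>(x,y). int y - int x) ` rim E"
  then obtain x y where "(x,y) \<in> E" "z = int y - int x" using rim_subset by force
  then show "z \<in> {1 - int (nrows E) .. int (ncols E) - 1}"
    using downsetD(2)[OF ds] downset_box_bounds[OF ds] by fastforce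
next
  fix d assume d: "d \<in> {1 - int (nrows E) .. int (ncols E) - 1}"
  define G where "G = {b \<in> E. int (snd b) - int (fst b) = d}"
  have "G \<noteq> {}"
  proof (cases "d \<ge> 0")
    case True
    have "(1, ncols E) \<in> E" using rim_corners(2)[OF ds ne] rim_subset by blast
    moreover have "1 \<le> nat (d + 1)" "nat (d + 1) \<le> ncols E" using True d by auto
    ultimately have "(1, nat (d + 1)) \<in> E" using downsetD(3)[OF ds] by blast
    then show ?thesis using True unfolding G_def by force
  next
    case False
    have "(nrows E, 1) \<in> E" using rim_corners(1)[OF ds ne] rim_subset by blast
    moreover have "1 \<le> nat (1 - d)" "nat (1 - d) \<le> nrows E" using False d by auto
    ultimately have "(nat (1 - d), 1) \<in> E" using downsetD(3)[OF ds] by blast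
    then show ?thesis using False unfolding G_def by force
  qed
  moreover have fin_G: "finite G" using downsetD(1)[OF ds] unfolding G_def by simp
  ultimately have "Max (fst ` G) \<in> fst ` G" by simp
  then obtain y where top: "(Max (fst ` G), y) \<in> G" by force
  have "(Max (fst ` G) + 1, y + 1) \<notin> G"
  proof
    assume "(Max (fst ` G) + 1, y + 1) \<in> G"
    then have "Max (fst ` G) + 1 \<le> Max (fst ` G)" using fin_G by (simp add: rev_image_eqI)
    then show False by simp
  qed
  then have "(Max (fst ` G), y) \<in> rim E" using top unfolding G_def rim_iff by simp
  then show "d \<in> (\<lambda>(x,y). int y - int x) ` rim E" using top unfolding G_def by force
qed

lemma card_rim:
  assumes ds: "downset E" and ne: "E \<noteq> {}"
  shows "card (rim E) = nrows E + ncols E - 1"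
proof -
  have "card (rim E) = card ((\<lambda>(x,y). int y - int x) ` rim E)"
    using card_image[OF rim_content_inj[OF ds]] by simp
  also have "\<dots> = nrows E + ncols E - 1"
    using rim_content_image[OF ds ne] by simp
  finally show ?thesis .
qed

lemma rim_corner_coordinates:
  assumes ds: "downset E" and ne: "E \<noteq> {}"
  shows "Min (snd ` rim E) = 1" "Max {x. (x,1) \<in> rim E} = nrows E"
    "Min (fst ` rim E) = 1" "Max {y. (1,y) \<in> rim E} = ncols E"
proof -
  have fin: "finite (rim E)" using downsetD(1)[OF ds] rim_subset finite_subset by blast
  have pos: "\<And>x y. (x,y) \<in> rim E \<Longrightarrow> 1 \<le> x \<and> 1 \<le> y" using downsetD(2)[OF ds] rim_subset by blast
  have bd: "\<And>x y. (x,y) \<in> rim E \<Longrightarrow> x \<le> nrows E \<and> y \<le> ncols E"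
    using downset_box_bounds[OF ds] rim_subset by blast
  note corners = rim_corners[OF ds ne]
  show "Min (snd ` rim E) = 1"
    using fin corners(1) pos by (intro Min_eqI) (auto simp: rev_image_eqI)
  show "Min (fst ` rim E) = 1"
    using fin corners(2) pos by (intro Min_eqI) (auto simp: rev_image_eqI)
  show "Max {x. (x,1) \<in> rim E} = nrows E"
    using corners(1) bd by (intro Max_eqI) (auto intro: finite_subset[of _ "{..nrows E}"])
  show "Max {y. (1,y) \<in> rim E} = ncols E"
    using corners(2) bd by (intro Max_eqI) (auto intro: finite_subset[of _ "{..ncols E}"])
qed

lemma rim_B_rim:
  fixes n :: nat
  assumes ds: "downset E" and ne: "E \<noteq> {}"
  defines "k \<equiv> Min (box_label n ` rim E)"
  shows "rim_B n (rim E) =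
    {#k#} + mset_set {k+1 .. int n - int (nrows E)} + mset_set {k+1 .. int n - int (ncols E)}"
  unfolding rim_B_def Let_def rim_corner_coordinates[OF ds ne] k_def by (simp add: box_label_def)

(* The minimal label k of the rim satisfies n + 1 - r - c <= k <= min(i, j), since all boxes
   satisfy x <= r and y <= c. *)
lemma rim_min_label_bounds:
  fixes n :: nat
  assumes ds: "downset E" and ne: "E \<noteq> {}"
  defines "k \<equiv> Min (box_label n ` rim E)"
  shows "k \<le> int n - int (nrows E)" "k \<le> int n - int (ncols E)"
    "int n + 1 - int (nrows E) - int (ncols E) \<le> k"
    "k \<in> box_label n ` rim E"
proof -
  have fin: "finite (rim E)" using downsetD(1)[OF ds] rim_subset finite_subset by blast
  note corners = rim_corners[OF ds ne]
  have "k \<le> box_label n (nrows E, 1)" "k \<le> box_label n (1, ncols E)"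
    using fin corners unfolding k_def by (auto intro: Min_le)
  then show "k \<le> int n - int (nrows E)" "k \<le> int n - int (ncols E)"
    by (simp_all add: box_label_def)
  show "k \<in> box_label n ` rim E" using fin corners unfolding k_def by (intro Min_in) auto
  show "int n + 1 - int (nrows E) - int (ncols E) \<le> k"
    using fin corners downset_box_bounds[OF ds] rim_subset unfolding k_def
    by (subst Min_ge_iff) (force simp: box_label_def)+
qed

(* Key estimate for a single rim: |B| = 1 + (i - k) + (j - k) = 2n + 1 - r - c - 2k, which
   differs from |R| = r + c - 1 by the even nonnegative number 2(r + c - 1 - n + k); moreover
   B consists of labels in {1..n-1} when all labels of the diagram are positive. *)
lemma rim_B_size_and_support:
  assumes ds: "downset E" and ne: "E \<noteq> {}" and pos: "\<forall>b\<in>E. 1 \<le> box_label n b"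
  shows "\<exists>t. card (rim E) = size (rim_B n (rim E)) + 2 * t"
    "set_mset (rim_B n (rim E)) \<subseteq> {1 .. int n - 1}"
proof -
  define k where "k = Min (box_label n ` rim E)"
  note bounds = rim_min_label_bounds[OF ds ne, of n, folded k_def]
  have k_pos: "1 \<le> k" using bounds(4) pos rim_subset by blast
  have r_pos: "1 \<le> nrows E" "1 \<le> ncols E"
    using rim_corners[OF ds ne] rim_subset downsetD(2)[OF ds] by blast+
  have size: "size (rim_B n (rim E)) = 1 + nat (int n - int (nrows E) - k) + nat (int n - int (ncols E) - k)"
    unfolding rim_B_rim[OF ds ne, of n, folded k_def] by simp
  show "\<exists>t. card (rim E) = size (rim_B n (rim E)) + 2 * t"
  proof
    show "card (rim E) = size (rim_B n (rim E)) + 2 * nat (int (nrows E) + int (ncols E) - int n - 1 + k)"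
      unfolding size card_rim[OF ds ne] using bounds r_pos by simp
  qed
  show "set_mset (rim_B n (rim E)) \<subseteq> {1 .. int n - 1}"
    unfolding rim_B_rim[OF ds ne, of n, folded k_def] using bounds k_pos r_pos by auto
qed

abbreviation peel :: "(nat \<times> nat) set \<Rightarrow> (nat \<times> nat) set" where
  "peel \<equiv> \<lambda>E. E - rim E"

lemma downset_peel:
  assumes ds: "downset E"
  shows "downset (peel E)"
  unfolding downset_def
proof (intro conjI allI impI)
  show "finite (peel E)" using downsetD(1)[OF ds] by simp
next
  fix x y assume "(x,y) \<in> peel E"
  then show "1 \<le> x" "1 \<le> y" using downsetD(2)[OF ds] by blast+
next
  fix x y x' y' assume b: "(x,y) \<in> peel E" "1 \<le> x'" "x' \<le> x" "1 \<le> y'" "y' \<le> y"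
  then have "(x,y) \<in> E" "(x+1, y+1) \<in> E" using rim_iff by auto
  then have "(x',y') \<in> E" "(x'+1, y'+1) \<in> E"
    using downsetD(3)[OF ds, of x y x' y'] downsetD(3)[OF ds, of "x+1" "y+1" "x'+1" "y'+1"] b by simp_all
  then show "(x',y') \<in> peel E" using rim_iff by blast
qed

lemma downset_peel_iter:
  assumes "downset D"
  shows "downset ((peel ^^ l) D)" "(peel ^^ l) D \<subseteq> D"
  using assms by (induction l) (auto simp: downset_peel)

(* A nonempty diagram has a nonempty rim (e.g. its lowest box). *)
lemma rim_nonempty:
  assumes "finite E" "E \<noteq> {}"
  shows "rim E \<noteq> {}"
proof -
  have "Max (fst ` E) \<in> fst ` E" using assms by simp
  then obtain y where top: "(Max (fst ` E), y) \<in> E" by force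
  have "(Max (fst ` E) + 1, y + 1) \<notin> E"
  proof
    assume "(Max (fst ` E) + 1, y + 1) \<in> E"
    then have "Max (fst ` E) + 1 \<le> Max (fst ` E)" using assms(1) by (simp add: rev_image_eqI)
    then show False by simp
  qed
  then show ?thesis using top unfolding rim_def by blast
qed

lemma card_peel_iter:
  assumes "finite D"
  shows "(\<Sum>l<N. card (rim ((peel ^^ l) D))) + card ((peel ^^ N) D) = card D"
proof (induction N)
  case (Suc N)
  have fin: "finite ((peel ^^ N) D)" using assms by (induction N) auto
  have "card ((peel ^^ N) D) = card (rim ((peel ^^ N) D)) + card (peel ((peel ^^ N) D))"
    using card_Diff_subset[OF finite_subset[OF rim_subset fin] rim_subset] card_mono[OF fin rim_subset]
    by simp
  then show ?case using Suc by simp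
qed simp

(* Each peeling of a nonempty diagram removes a box, so card D + 1 peelings exhaust D. *)
lemma card_peel_iter_le:
  assumes "finite D"
  shows "card ((peel ^^ N) D) \<le> card D - N"
proof (induction N)
  case (Suc N)
  have fin: "finite ((peel ^^ N) D)" using assms by (induction N) auto
  show ?case
  proof (cases "(peel ^^ N) D = {}")
    case False
    then have "card (peel ((peel ^^ N) D)) < card ((peel ^^ N) D)"
      using fin rim_nonempty[OF fin False] rim_subset by (intro psubset_card_mono) auto
    then show ?thesis using Suc by simp
  qed simp
qed simp

lemma sum_card_rim_decomposition:
  assumes "finite D"
  shows "(\<Sum>R\<leftarrow>rim_decomposition D. card R) = card D"
proof -
  have "(\<Sum>R\<leftarrow>rim_decomposition D. card R) = (\<Sum>l\<leftarrow>[0..<card D + 1]. card (rim_at D l))"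
    unfolding rim_decomposition_def
    by (subst sum_list_map_filter) (auto simp: comp_def simp del: upt_Suc)
  also have "\<dots> = (\<Sum>l<card D + 1. card (rim_at D l))"
    by (simp only: interv_sum_list_conv_sum_set_nat set_upt lessThan_atLeast0)
  also have "\<dots> = card D"
    using card_peel_iter[OF assms, of "card D + 1"] card_peel_iter_le[OF assms, of "card D + 1"]
    unfolding rim_at_def by simp
  finally show ?thesis .
qed

lemma rim_decomposition_members:
  assumes "downset D" "R \<in> set (rim_decomposition D)"
  obtains E where "downset E" "E \<subseteq> D" "E \<noteq> {}" "R = rim E"
proof -
  obtain l where "R = rim ((peel ^^ l) D)" "R \<noteq> {}"
    using assms(2) unfolding rim_decomposition_def rim_at_def by (auto simp del: upt_Suc)
  then show ?thesis using that downset_peel_iter[OF assms(1)] rim_subset by blast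
qed

lemma sum_list_congruent_mod_2:
  fixes f g :: "'a \<Rightarrow> nat"
  assumes "\<forall>x\<in>set xs. \<exists>t. f x = g x + 2 * t"
  shows "\<exists>T. (\<Sum>x\<leftarrow>xs. f x) = (\<Sum>x\<leftarrow>xs. g x) + 2 * T"
  using assms
proof (induction xs)
  case (Cons a xs)
  then obtain T t where "(\<Sum>x\<leftarrow>xs. f x) = (\<Sum>x\<leftarrow>xs. g x) + 2 * T" "f a = g a + 2 * t" by auto
  then show ?case by (intro exI[of _ "T + t"]) simp
qed simp

lemma sum_count_eq_size:
  assumes "set_mset X \<subseteq> h ` A" "inj_on h A" "finite A"
  shows "(\<Sum>p\<in>A. count X (h p)) = size X"
proof -
  have "size X = sum (count X) (set_mset X)" by (simp add: size_multiset_overloaded_eq)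
  also have "\<dots> = sum (count X) (h ` A)"
    using assms(1,3) by (intro sum.mono_neutral_left) (auto simp: count_eq_zero_iff)
  also have "\<dots> = (\<Sum>p\<in>A. count X (h p))" using assms(2) by (simp add: sum.reindex)
  finally show ?thesis by simp
qed

lemma rim_B_total:
  assumes ds: "downset D" and pos: "\<forall>b\<in>D. 1 \<le> box_label n b"
  defines "X \<equiv> (\<Sum>R\<leftarrow>rim_decomposition D. rim_B n R)"
  shows "set_mset X \<subseteq> {1 .. int n - 1}" "\<exists>T. card D = size X + 2 * T"
proof -
  have each: "(\<exists>t. card R = size (rim_B n R) + 2 * t) \<and>
      set_mset (rim_B n R) \<subseteq> {1 .. int n - 1}"
    if R_mem: "R \<in> set (rim_decomposition D)" for R
  proof -
    obtain E where E: "downset E" "E \<subseteq> D" "E \<noteq> {}" "R = rim E"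
      using rim_decomposition_members[OF ds R_mem] .
    then show ?thesis using rim_B_size_and_support[OF E(1,3)] pos by blast
  qed
  then show "set_mset X \<subseteq> {1 .. int n - 1}" unfolding X_def by auto
  have "card D = (\<Sum>R\<leftarrow>rim_decomposition D. card R)"
    using sum_card_rim_decomposition downsetD(1)[OF ds] by simp
  moreover have "size X = (\<Sum>R\<leftarrow>rim_decomposition D. size (rim_B n R))"
    unfolding X_def using size_multiset_sum_list[of "map (rim_B n) (rim_decomposition D)"]
    by (simp add: comp_def)
  ultimately show "\<exists>T. card D = size X + 2 * T"
    using sum_list_congruent_mod_2[of "rim_decomposition D" card "\<lambda>R. size (rim_B n R)"] each
    by simp
qed

theorem proposition3p3:
  fixes n :: nat and M :: "(nat \<times> nat) set"
  assumes "noncrossing_matching n M"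
  shows "(\<Sum>p=1..n-1. mult_m n M p) \<le> dpi n M \<and> even (dpi n M - (\<Sum>p=1..n-1. mult_m n M p))"
proof -
  define D where "D = young_diagram n M"
  define X where "X = (\<Sum>R\<leftarrow>rim_decomposition D. rim_B n R)"
  have ds: "downset D" and pos: "\<forall>b\<in>D. 1 \<le> box_label n b"
    using young_diagram_downset[OF assms] young_diagram_label_pos[OF assms] unfolding D_def by auto
  obtain T where T: "dpi n M = size X + 2 * T"
    using rim_B_total(2)[OF ds pos] card_young_diagram unfolding D_def X_def by metis
  have "{1 .. int n - 1} = int ` {1..n-1}" by (cases n) (auto simp: image_int_atLeastAtMost)
  then have "(\<Sum>p=1..n-1. mult_m n M p) = size X"
    using sum_count_eq_size[of X int "{1..n-1}"] rim_B_total(1)[OF ds pos]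
    unfolding mult_m_def X_def D_def by simp
  then show ?thesis using T by simp
qed

end
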